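(* Let $\Omega\subset\mathbb{R}^n$ be a bounded open set with Lipschitz boundary. Let $E\subset\mathbb{R}^n$ be such that $\partial^-E\cap\Omega\neq\emptyset$ and $\overline{\mathrm{Dim}}_{\mathcal M}(\partial^-E,\Omega)\in[n-1,n)$. Then \[ P_s(E,\Omega)<\infty\qquad\text{for every } s\in\big(0,\,n-\overline{\mathrm{Dim}}_{\mathcal M}(\partial^-E,\Omega)\big). \]
   Context: $\mathcal L_s(A,B):=\int_A\int_B|x-y|^{-n-s}dx\,dy$; $P_s(E,\Omega):=\mathcal L_s(E\cap\Omega,E^c\cap\Omega)+\mathcal L_s(E\cap\Omega,E^c\setminus\Omega)+\mathcal L_s(E\setminus\Omega,E^c\cap\Omega)$. $\partial^-E:=\{x: 0<|E\cap B_r(x)|<\omega_nr^n\ \forall r>0\}$. For $\Gamma\subset\mathbb{R}^n$ and $\rho>0$, $\bar N^\Omega_\rho(\Gamma):=\{x\in\Omega: d(x,\Gamma)\leq\rho\}$; for $r\in[0,n]$, $\overline{\mathcal M}^r(\Gamma,\Omega):=\limsup_{\rho\to0}|\bar N^\Omega_\rho(\Gamma)|/\rho^{n-r}$, and the upper Minkowski dimension of $\Gamma$ in $\Omega$ is $\overline{\mathrm{Dim}}_{\mathcal M}(\Gamma,\Omega):=\sup\{r\in[0,n]:\overline{\mathcal M}^r(\Gamma,\Omega)=\infty\}$. *)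

theory Defs
  imports "HOL-Analysis.Analysis"
begin

text \<open>Dimension n = DIM('a); the ambient space R^n is an abstract euclidean_space 'a.\<close>

definition Ls :: "real \<Rightarrow> 'a::euclidean_space set \<Rightarrow> 'a set \<Rightarrow> ennreal" where
  "Ls s A B = (\<integral>\<^sup>+ x. (\<integral>\<^sup>+ y. ennreal (norm (x - y) powr (- (real DIM('a) + s)))
                  * indicator B y \<partial>lebesgue) * indicator A x \<partial>lebesgue)"

definition Ps :: "real \<Rightarrow> 'a::euclidean_space set \<Rightarrow> 'a set \<Rightarrow> ennreal" where
  "Ps s E \<Omega> = Ls s (E \<inter> \<Omega>) ((- E) \<inter> \<Omega>) + Ls s (E \<inter> \<Omega>) ((- E) - \<Omega>)
              + Ls s (E - \<Omega>) ((- E) \<inter> \<Omega>)"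

definition meas_boundary :: "'a::euclidean_space set \<Rightarrow> 'a set" where
  "meas_boundary E = {x. \<forall>r>0. 0 < emeasure lebesgue (E \<inter> ball x r)
                               \<and> emeasure lebesgue (E \<inter> ball x r) < emeasure lebesgue (ball x r)}"

definition nbhd_in :: "'a::euclidean_space set \<Rightarrow> 'a set \<Rightarrow> real \<Rightarrow> 'a set" where
  "nbhd_in \<Gamma> \<Omega> \<rho> = {x \<in> \<Omega>. infdist x \<Gamma> \<le> \<rho>}"

definition upper_mink_content :: "real \<Rightarrow> 'a::euclidean_space set \<Rightarrow> 'a set \<Rightarrow> ereal" where
  "upper_mink_content r \<Gamma> \<Omega> =
     Limsup (at_right 0) (\<lambda>\<rho>. ereal (measure lebesgue (nbhd_in \<Gamma> \<Omega> \<rho>) / \<rho> powr (real DIM('a) - r)))"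

text \<open>Upper Minkowski dimension (sup over an empty set is -infinity).\<close>
definition upper_mink_dim :: "'a::euclidean_space set \<Rightarrow> 'a set \<Rightarrow> ereal" where
  "upper_mink_dim \<Gamma> \<Omega> =
     Sup (ereal ` {r \<in> {0..real DIM('a)}. upper_mink_content r \<Gamma> \<Omega> = \<infinity>})"

text \<open>Lipschitz boundary: near each boundary point, Omega is (in suitable rotated coordinates)
  the strict supergraph of a Lipschitz function. The rotation is encoded by a unit vector e
  (the n-th axis) and the orthogonal hyperplane {z. z \<bullet> e = 0} (the first n-1 coordinates).\<close>
definition lipschitz_boundary :: "'a::euclidean_space set \<Rightarrow> bool" where
  "lipschitz_boundary \<Omega> \<longleftrightarrow>
     (\<forall>x \<in> frontier \<Omega>. \<exists>r>0. \<exists>e::'a. \<exists>\<gamma>::'a \<Rightarrow> real. \<exists>L.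
        norm e = 1 \<and> L-lipschitz_on {z. z \<bullet> e = 0} \<gamma> \<and>
        \<Omega> \<inter> ball x r = {y \<in> ball x r. y \<bullet> e > \<gamma> (y - (y \<bullet> e) *\<^sub>R e)})"

end

theory Submission
  imports Defs
begin

text \<open>Split \<open>P_s(E, \<Omega>)\<close> into the interaction of \<open>E \<inter> \<Omega>\<close> with \<open>\<Omega> - E\<close> and the two terms that cross
  \<open>\<partial>\<Omega>\<close>; the latter are bounded by \<open>L_s(\<Omega>, -\<Omega>)\<close>. Integrating the kernel over dyadic annuli
  gives \<open>\<integral>_{|x-y| \<ge> \<delta>} |x-y|^(-n-s) dy \<le> K \<delta>^(-s)\<close>. For a.e. \<open>x \<in> E\<close> the ball of radius
  \<open>\<delta> = d(x, \<partial>\<^sup>-E)\<close> is a.e. contained in \<open>E\<close>, and for \<open>x \<in> \<Omega>\<close> the ball of radius \<open>d(x, -\<Omega>)\<close> lies in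
  \<open>\<Omega>\<close>; so both terms are bounded by \<open>\<integral>_\<Omega> d(x, \<Gamma>)^(-s) dx\<close> for \<open>\<Gamma> = \<partial>\<^sup>-E\<close> resp. \<open>-\<Omega>\<close>. Summing over the
  dyadic layers \<open>{2^(-k-1) \<rho> < d(x, \<Gamma>) \<le> 2^(-k) \<rho>}\<close>, this integral is finite as soon as
  \<open>|N_\<rho>(\<Gamma>) \<inter> \<Omega>| \<le> C \<rho>^a\<close> with \<open>a > s\<close>. For \<open>\<partial>\<^sup>-E\<close> this holds with any \<open>a < n - Dim\<close> by definition of
  the Minkowski dimension; for \<open>-\<Omega>\<close> it holds with \<open>a = 1\<close> because \<open>\<partial>\<Omega>\<close> is locally a Lipschitz graph,
  and \<open>s < 1\<close> follows from \<open>Dim \<ge> n - 1\<close>.\<close>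

section \<open>Kernel estimates\<close>

lemma dyadic_bracket:
  fixes t :: real
  assumes "1 \<le> t"
  obtains k :: nat where "2 ^ k \<le> t" "t < 2 ^ Suc k"
proof -
  define k where "k = nat \<lfloor>log 2 t\<rfloor>"
  have "\<lfloor>log 2 t\<rfloor> = int k"
    using assms by (simp add: k_def)
  then have "2 powr real k \<le> t \<and> t < 2 powr (real k + 1)"
    using floor_log_eq_powr_iff[of t 2 "int k"] assms by simp
  then show ?thesis
    using that[of k] by (simp add: powr_realpow powr_add mult.commute)
qed

lemma ennreal_le_suminf: "(f k :: ennreal) \<le> (\<Sum>i. f i)"
  using sum_le_suminf[OF summableI, of "{k}" f] by simp

lemma suminf_ennreal_geometric:
  fixes q c :: real
  assumes "0 \<le> q" "q < 1" "0 \<le> c"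
  shows "(\<Sum>j. ennreal (c * q ^ j)) = ennreal (c / (1 - q))"
proof -
  have "summable (\<lambda>j. c * q ^ j)"
    using assms by (intro summable_mult summable_geometric) auto
  then have "(\<Sum>j. ennreal (c * q ^ j)) = ennreal (\<Sum>j. c * q ^ j)"
    using assms by (intro suminf_ennreal2) auto
  also have "(\<Sum>j. c * q ^ j) = c / (1 - q)"
    using assms by (simp add: suminf_mult suminf_geometric divide_simps)
  finally show ?thesis .
qed

lemma emeasure_lebesgue_ball:
  fixes x :: "'a::euclidean_space"
  assumes "0 \<le> r"
  shows "emeasure lebesgue (ball x r) = ennreal (r ^ DIM('a) * measure lebesgue (ball (0::'a) 1))"
  using emeasure_lebesgue_ball_conv_unit_ball[OF assms, of x]
    emeasure_lborel_ball_finite[of "0::'a" 1] assms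
  by (subst (asm) emeasure_eq_ennreal_measure) (auto simp: ennreal_mult')

lemma dyadic_powr_shift:
  fixes r s a :: real and k :: nat
  assumes "0 < r"
  shows "(r / 2 ^ Suc k) powr (-s) * (r / 2 ^ k) powr a = r powr (a - s) * 2 powr s * (2 powr (s - a)) ^ k"
proof -
  have "(r / 2 ^ Suc k) powr (-s) * (r / 2 ^ k) powr a
      = r powr (a - s) * 2 powr (real (Suc k) * s - real k * a)"
    using assms by (simp add: powr_divide powr_realpow[symmetric] powr_powr powr_diff powr_minus
        powr_add powr_mult field_simps)
  also have "\<dots> = r powr (a - s) * 2 powr s * (2 powr (s - a)) ^ k"
    by (simp add: powr_power mult.assoc flip: powr_add) (simp add: algebra_simps)
  finally show ?thesis .
qed

lemma nbhd_in_sets_lebesgue [measurable]: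
  fixes \<Gamma> \<Omega> :: "'a::euclidean_space set"
  assumes "open \<Omega>"
  shows "nbhd_in \<Gamma> \<Omega> \<rho> \<in> sets lebesgue"
proof -
  have "closed {x::'a. infdist x \<Gamma> \<le> \<rho>}"
    by (intro closed_Collect_le continuous_intros)
  moreover have "nbhd_in \<Gamma> \<Omega> \<rho> = \<Omega> \<inter> {x. infdist x \<Gamma> \<le> \<rho>}"
    by (auto simp: nbhd_in_def)
  ultimately show ?thesis
    using assms by (simp add: borel_open borel_closed sets_completionI_sets)
qed

lemma open_sets_lebesgue [measurable]: "open (S::'a::euclidean_space set) \<Longrightarrow> S \<in> sets lebesgue"
  by (simp add: borel_open sets_completionI_sets)

lemma borel_measurable_infdist [measurable]: "(\<lambda>x::'a::euclidean_space. infdist x S) \<in> borel_measurable lebesgue"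
  by (intro measurable_completion) (simp add: borel_measurable_continuous_onI continuous_on_infdist continuous_on_id)

definition kernel_tail_const :: "'a::euclidean_space itself \<Rightarrow> real \<Rightarrow> real" where
  "kernel_tail_const T s = 2 ^ DIM('a) * measure lebesgue (ball (0::'a) 1) / (1 - 2 powr (-s))"

lemma kernel_tail_const_nonneg: "0 < s \<Longrightarrow> 0 \<le> kernel_tail_const TYPE('a::euclidean_space) s"
  unfolding kernel_tail_const_def by (intro divide_nonneg_pos mult_nonneg_nonneg) (auto intro: powr_less_one)

lemma kernel_le_dyadic_balls:
  fixes x y :: "'a::euclidean_space"
  assumes s: "0 < s" and \<delta>: "0 < \<delta>" "\<delta> \<le> dist x y"
  shows "ennreal (norm (x - y) powr (- (real DIM('a) + s)))
    \<le> (\<Sum>j. ennreal ((2 ^ j * \<delta>) powr (- (real DIM('a) + s))) * indicator (ball x (2 ^ Suc j * \<delta>)) y)"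
proof -
  have "1 \<le> dist x y / \<delta>" using \<delta> by simp
  then obtain k where k: "2 ^ k \<le> dist x y / \<delta>" "dist x y / \<delta> < 2 ^ Suc k"
    by (rule dyadic_bracket)
  have "norm (x - y) powr (- (real DIM('a) + s)) \<le> (2 ^ k * \<delta>) powr (- (real DIM('a) + s))"
    unfolding dist_norm[symmetric] using k(1) \<delta> s by (intro powr_mono2') (auto simp: field_simps)
  moreover have "y \<in> ball x (2 ^ Suc k * \<delta>)" using k(2) \<delta> by (simp add: field_simps)
  ultimately have "ennreal (norm (x - y) powr (- (real DIM('a) + s)))
      \<le> ennreal ((2 ^ k * \<delta>) powr (- (real DIM('a) + s))) * indicator (ball x (2 ^ Suc k * \<delta>)) y"
    by (simp add: ennreal_leI)
  also have "\<dots> \<le> (\<Sum>j. ennreal ((2 ^ j * \<delta>) powr (- (real DIM('a) + s))) * indicator (ball x (2 ^ Suc j * \<delta>)) y)"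
    by (rule ennreal_le_suminf)
  finally show ?thesis .
qed

text \<open>The \<open>j\<close>-th dyadic ball contributes \<open>(2^j \<delta>)^(-n-s) |B(2^(j+1) \<delta>)|\<close>, a geometric series of ratio
  \<open>2^(-s)\<close>.\<close>
lemma nn_integral_kernel_far_le:
  fixes x :: "'a::euclidean_space"
  assumes s: "0 < s" and \<delta>: "0 < \<delta>" and far: "AE y in lebesgue. y \<in> A \<longrightarrow> \<delta> \<le> dist x y"
  shows "(\<integral>\<^sup>+y\<in>A. ennreal (norm (x - y) powr (- (real DIM('a) + s))) \<partial>lebesgue)
         \<le> ennreal (kernel_tail_const TYPE('a) s * \<delta> powr (-s))"
proof -
  let ?n = "real DIM('a)"
  define v where "v = measure lebesgue (ball (0::'a) 1)"
  define c where "c j = (2 ^ j * \<delta>) powr (- (?n + s))" for j :: nat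
  define R where "R j = 2 ^ Suc j * \<delta>" for j :: nat
  have "AE y in lebesgue. ennreal (norm (x - y) powr (- (?n + s))) * indicator A y
        \<le> (\<Sum>j. ennreal (c j) * indicator (ball x (R j)) y)"
    using far
  proof eventually_elim
    case (elim y)
    then show ?case
      using kernel_le_dyadic_balls[OF s \<delta>, of x y] by (cases "y \<in> A") (simp_all add: c_def R_def)
  qed
  then have "(\<integral>\<^sup>+y\<in>A. ennreal (norm (x - y) powr (- (?n + s))) \<partial>lebesgue)
      \<le> (\<integral>\<^sup>+ y. (\<Sum>j. ennreal (c j) * indicator (ball x (R j)) y) \<partial>lebesgue)"
    by (rule nn_integral_mono_AE)
  also have "\<dots> = (\<Sum>j. ennreal (c j) * emeasure lebesgue (ball x (R j)))"
    by (simp add: nn_integral_suminf nn_integral_cmult_indicator)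
  also have "\<dots> = (\<Sum>j. ennreal ((v * 2 ^ DIM('a) * \<delta> powr (-s)) * (2 powr (-s)) ^ j))"
  proof (rule suminf_cong)
    fix j
    have "(2 ^ j * \<delta>) powr (-s) = (2 powr (-s)) ^ j * \<delta> powr (-s)"
      using \<delta> by (simp add: powr_mult powr_realpow[symmetric] powr_powr powr_power mult.commute)
    moreover have "(2 ^ j * \<delta>) powr (- (?n + s)) * (2 ^ j * \<delta>) ^ DIM('a) = (2 ^ j * \<delta>) powr (-s)"
      using \<delta> by (simp add: powr_realpow[symmetric] powr_add[symmetric])
    ultimately have "c j * (R j ^ DIM('a) * v) = (v * 2 ^ DIM('a) * \<delta> powr (-s)) * (2 powr (-s)) ^ j"
      by (simp add: c_def R_def power_mult_distrib algebra_simps)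
    moreover have "emeasure lebesgue (ball x (R j)) = ennreal (R j ^ DIM('a) * v)"
      unfolding v_def using \<delta> by (intro emeasure_lebesgue_ball) (simp add: R_def)
    ultimately show "ennreal (c j) * emeasure lebesgue (ball x (R j))
        = ennreal ((v * 2 ^ DIM('a) * \<delta> powr (-s)) * (2 powr (-s)) ^ j)"
      using \<delta> by (simp add: v_def c_def R_def flip: ennreal_mult)
  qed
  also have "\<dots> = ennreal (kernel_tail_const TYPE('a) s * \<delta> powr (-s))"
    using s by (subst suminf_ennreal_geometric)
      (auto intro: powr_less_one simp: kernel_tail_const_def v_def mult_ac)
  finally show ?thesis .
qed

lemma infdist_powr_le_dyadic_layers:
  fixes \<Gamma> \<Omega> :: "'a::euclidean_space set"
  assumes s: "0 < s" and \<rho>: "0 < \<rho>" and x: "x \<in> \<Omega>"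
  shows "ennreal (infdist x \<Gamma> powr (-s)) \<le> ennreal (\<rho> powr (-s))
           + (\<Sum>k. ennreal ((\<rho> / 2 ^ Suc k) powr (-s)) * indicator (nbhd_in \<Gamma> \<Omega> (\<rho> / 2 ^ k)) x)"
    (is "_ \<le> _ + ?layers")
proof -
  define d where "d = infdist x \<Gamma>"
  consider "d = 0" | "\<rho> \<le> d" | "0 < d" "d < \<rho>"
    using infdist_nonneg[of x \<Gamma>] unfolding d_def by linarith
  then show ?thesis
  proof cases
    case 1
    then show ?thesis by (simp add: d_def[symmetric])
  next
    case 2
    then have "ennreal (d powr (-s)) \<le> ennreal (\<rho> powr (-s))"
      using \<rho> s by (intro ennreal_leI powr_mono2') auto
    then show ?thesis unfolding d_def by (rule add_increasing2[OF zero_le])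
  next
    case 3
    then have "1 \<le> \<rho> / d" by simp
    then obtain k where k: "2 ^ k \<le> \<rho> / d" "\<rho> / d < 2 ^ Suc k"
      by (rule dyadic_bracket)
    have "x \<in> nbhd_in \<Gamma> \<Omega> (\<rho> / 2 ^ k)"
      using k(1) 3 x by (simp add: nbhd_in_def d_def[symmetric] field_simps)
    moreover have "d powr (-s) \<le> (\<rho> / 2 ^ Suc k) powr (-s)"
      using k(2) 3 s by (intro powr_mono2') (auto simp: field_simps)
    ultimately have "ennreal (d powr (-s))
        \<le> ennreal ((\<rho> / 2 ^ Suc k) powr (-s)) * indicator (nbhd_in \<Gamma> \<Omega> (\<rho> / 2 ^ k)) x"
      by (simp add: ennreal_leI)
    also have "\<dots> \<le> ?layers"
      by (rule ennreal_le_suminf)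
    finally show ?thesis unfolding d_def by (rule add_increasing[OF zero_le])
  qed
qed

lemma nn_integral_infdist_powr_finite:
  fixes \<Gamma> \<Omega> :: "'a::euclidean_space set"
  assumes \<Omega>: "open \<Omega>" "bounded \<Omega>" and s: "0 < s" "s < a" and \<rho>: "0 < \<rho>" and C: "0 \<le> C"
    and nbhd: "\<And>r. 0 < r \<Longrightarrow> r \<le> \<rho> \<Longrightarrow> emeasure lebesgue (nbhd_in \<Gamma> \<Omega> r) \<le> ennreal (C * r powr a)"
  shows "(\<integral>\<^sup>+x\<in>\<Omega>. ennreal (infdist x \<Gamma> powr (-s)) \<partial>lebesgue) < \<infinity>"
proof -
  define c where "c k = (\<rho> / 2 ^ Suc k) powr (-s)" for k :: nat
  define N where "N k = nbhd_in \<Gamma> \<Omega> (\<rho> / 2 ^ k)" for k :: nat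
  have [measurable]: "N k \<in> sets lebesgue" for k
    unfolding N_def using \<Omega> by measurable
  have layer: "ennreal (c k) * emeasure lebesgue (N k)
      \<le> ennreal ((C * \<rho> powr (a - s) * 2 powr s) * (2 powr (s - a)) ^ k)" for k
  proof -
    have "emeasure lebesgue (N k) \<le> ennreal (C * (\<rho> / 2 ^ k) powr a)"
      unfolding N_def using \<rho> by (intro nbhd) (auto simp: field_simps)
    then have "ennreal (c k) * emeasure lebesgue (N k) \<le> ennreal (c k * (C * (\<rho> / 2 ^ k) powr a))"
      using C by (simp add: c_def ennreal_mult mult_left_mono)
    also have "c k * (C * (\<rho> / 2 ^ k) powr a) = (C * \<rho> powr (a - s) * 2 powr s) * (2 powr (s - a)) ^ k"
      using dyadic_powr_shift[OF \<rho>, of k s a] by (simp add: c_def mult_ac)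
    finally show ?thesis .
  qed
  have "(\<integral>\<^sup>+x\<in>\<Omega>. ennreal (infdist x \<Gamma> powr (-s)) \<partial>lebesgue)
      \<le> (\<integral>\<^sup>+x. ennreal (\<rho> powr (-s)) * indicator \<Omega> x + (\<Sum>k. ennreal (c k) * indicator (N k) x) \<partial>lebesgue)"
    using infdist_powr_le_dyadic_layers[OF s(1) \<rho>]
    by (intro nn_integral_mono) (auto simp: c_def N_def indicator_def)
  also have "\<dots> = ennreal (\<rho> powr (-s)) * emeasure lebesgue \<Omega> + (\<Sum>k. ennreal (c k) * emeasure lebesgue (N k))"
    using \<Omega> by (simp add: nn_integral_add nn_integral_suminf nn_integral_cmult_indicator)
  also have "\<dots> \<le> ennreal (\<rho> powr (-s)) * emeasure lebesgue \<Omega>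
      + (\<Sum>k. ennreal ((C * \<rho> powr (a - s) * 2 powr s) * (2 powr (s - a)) ^ k))"
    by (intro add_left_mono suminf_le summableI layer)
  also have "\<dots> < \<infinity>"
    using \<Omega> s C emeasure_bounded_finite[of \<Omega>]
    by (subst suminf_ennreal_geometric) (auto intro: powr_less_one simp: ennreal_mult_less_top)
  finally show ?thesis .
qed

section \<open>Measure-theoretic boundary and Minkowski dimension\<close>

lemma locally_null_imp_null:
  fixes A S :: "'a::euclidean_space set"
  assumes loc: "\<And>z. z \<in> S \<Longrightarrow> \<exists>r>0. A \<inter> ball z r \<in> null_sets lebesgue"
  shows "A \<inter> S \<in> null_sets lebesgue"
proof -
  define F where "F = {ball z r | z r. r > 0 \<and> A \<inter> ball z r \<in> null_sets lebesgue}"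
  obtain F' where F': "F' \<subseteq> F" "countable F'" "\<Union>F' = \<Union>F"
    by (rule Lindelof[of F]) (auto simp: F_def)
  have "(\<Union>T\<in>F'. A \<inter> T) \<in> null_sets lebesgue"
    using F' by (intro null_sets_UN') (auto simp: F_def)
  moreover have "A \<inter> S \<subseteq> (\<Union>T\<in>F'. A \<inter> T)"
  proof
    fix x assume x: "x \<in> A \<inter> S"
    then obtain r where "r > 0" "A \<inter> ball x r \<in> null_sets lebesgue" using loc by blast
    then have "x \<in> \<Union>F" unfolding F_def by force
    then show "x \<in> (\<Union>T\<in>F'. A \<inter> T)" using x F'(3) by blast
  qed
  ultimately show ?thesis by (rule null_sets_completion_subset[rotated])
qed

lemma open_locally_null_points:
  fixes A :: "'a::euclidean_space set"
  shows "open {z. \<exists>r>0. A \<inter> ball z r \<in> null_sets lebesgue}"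
proof (rule openI)
  fix z assume "z \<in> {z. \<exists>r>0. A \<inter> ball z r \<in> null_sets lebesgue}"
  then obtain r where r: "r > 0" "A \<inter> ball z r \<in> null_sets lebesgue" by blast
  have "ball z r \<subseteq> {z. \<exists>r>0. A \<inter> ball z r \<in> null_sets lebesgue}"
  proof
    fix w assume w: "w \<in> ball z r"
    have "ball w (r - dist z w) \<subseteq> ball z r"
      by (simp add: ball_subset_ball_iff dist_commute)
    then have "A \<inter> ball w (r - dist z w) \<in> null_sets lebesgue"
      by (intro null_sets_completion_subset[OF _ r(2)]) blast
    moreover have "0 < r - dist z w" using w by simp
    ultimately show "w \<in> {z. \<exists>r>0. A \<inter> ball z r \<in> null_sets lebesgue}" by blast
  qed
  with r(1) show "\<exists>\<epsilon>>0. ball z \<epsilon> \<subseteq> {z. \<exists>r>0. A \<inter> ball z r \<in> null_sets lebesgue}"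
    by blast
qed

lemma ball_not_null: "0 < r \<Longrightarrow> ball (x::'a::euclidean_space) r \<notin> null_sets lebesgue"
  using content_ball_pos[of r x] by (auto simp: null_sets_def emeasure_eq_measure2)

lemma locally_null_or_conull_if_not_meas_boundary:
  fixes E :: "'a::euclidean_space set"
  assumes E: "E \<in> sets lebesgue" and z: "z \<notin> meas_boundary E"
  obtains r where "0 < r" "E \<inter> ball z r \<in> null_sets lebesgue \<or> (- E) \<inter> ball z r \<in> null_sets lebesgue"
proof -
  obtain r where r: "r > 0" "\<not> (0 < emeasure lebesgue (E \<inter> ball z r)
       \<and> emeasure lebesgue (E \<inter> ball z r) < emeasure lebesgue (ball z r))"
    using z unfolding meas_boundary_def by auto
  have "E \<inter> ball z r \<in> null_sets lebesgue \<or> (- E) \<inter> ball z r \<in> null_sets lebesgue"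
  proof (cases "emeasure lebesgue (E \<inter> ball z r) = 0")
    case False
    then have "emeasure lebesgue (ball z r) \<le> emeasure lebesgue (E \<inter> ball z r)"
      using r(2) by (auto simp: not_less zero_less_iff_neq_zero)
    moreover have "emeasure lebesgue (E \<inter> ball z r) \<le> emeasure lebesgue (ball z r)"
      by (rule emeasure_mono) auto
    moreover have "emeasure lebesgue (ball z r) < \<infinity>"
      using emeasure_lborel_ball_finite[of z r] by simp
    ultimately have "emeasure lebesgue (ball z r - E \<inter> ball z r) = 0"
      using E by (subst emeasure_Diff) auto
    moreover have "(- E) \<inter> ball z r = ball z r - E \<inter> ball z r" by auto
    ultimately show ?thesis using E by (auto simp: null_sets_def)
  qed (use E in \<open>auto simp: null_sets_def\<close>)
  then show ?thesis using r(1) that by blast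
qed

text \<open>The points near which \<open>E\<close> is null and those near which \<open>- E\<close> is null form two disjoint open
  sets, which cover a ball avoiding the measure-theoretic boundary; by connectedness the ball lies
  in one of them.\<close>
lemma ball_diff_null_if_disjoint_meas_boundary:
  fixes E :: "'a::euclidean_space set"
  assumes E: "E \<in> sets lebesgue" and d: "0 < d" and disj: "ball x d \<inter> meas_boundary E = {}"
    and dense: "\<And>r. r > 0 \<Longrightarrow> E \<inter> ball x r \<notin> null_sets lebesgue"
  shows "ball x d - E \<in> null_sets lebesgue"
proof -
  define U0 where "U0 = {z. \<exists>r>0. E \<inter> ball z r \<in> null_sets lebesgue}"
  define U1 where "U1 = {z. \<exists>r>0. (- E) \<inter> ball z r \<in> null_sets lebesgue}"
  have cover: "ball x d \<subseteq> U0 \<union> U1"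
  proof
    fix z assume "z \<in> ball x d"
    then have "z \<notin> meas_boundary E" using disj by auto
    then show "z \<in> U0 \<union> U1"
      by (rule locally_null_or_conull_if_not_meas_boundary[OF E]) (auto simp: U0_def U1_def)
  qed
  have "U0 \<inter> U1 = {}"
  proof (rule ccontr)
    assume "U0 \<inter> U1 \<noteq> {}"
    then obtain z r0 r1 where "r0 > 0" "E \<inter> ball z r0 \<in> null_sets lebesgue"
      "r1 > 0" "(- E) \<inter> ball z r1 \<in> null_sets lebesgue" unfolding U0_def U1_def by auto
    then have "(E \<inter> ball z r0) \<union> ((- E) \<inter> ball z r1) \<in> null_sets lebesgue" by auto
    moreover have "ball z (min r0 r1) \<subseteq> (E \<inter> ball z r0) \<union> ((- E) \<inter> ball z r1)" by auto
    ultimately have "ball z (min r0 r1) \<in> null_sets lebesgue"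
      by (rule null_sets_completion_subset[rotated])
    moreover have "0 < min r0 r1" using \<open>r0 > 0\<close> \<open>r1 > 0\<close> by simp
    ultimately show False using ball_not_null by blast
  qed
  moreover have "open U0" "open U1"
    unfolding U0_def U1_def by (rule open_locally_null_points)+
  ultimately have "U0 \<inter> ball x d = {} \<or> U1 \<inter> ball x d = {}"
    using cover by (intro connectedD[OF connected_ball]) auto
  moreover have "x \<notin> U0" using dense unfolding U0_def by auto
  moreover have "x \<in> ball x d" using d by simp
  ultimately have "ball x d \<subseteq> U1" using cover by blast
  then have "(- E) \<inter> ball x d \<in> null_sets lebesgue"
    using locally_null_imp_null[of "ball x d" "- E"] unfolding U1_def by blast
  then show ?thesis by (simp add: Diff_eq Int_commute)
qed

lemma nn_integral_kernel_compl_le_infdist: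
  fixes E :: "'a::euclidean_space set"
  assumes E: "E \<in> sets lebesgue" and s: "0 < s" and \<delta>: "0 < infdist x (meas_boundary E)"
    and dense: "\<And>r. r > 0 \<Longrightarrow> E \<inter> ball x r \<notin> null_sets lebesgue"
  shows "(\<integral>\<^sup>+y\<in>- E. ennreal (norm (x - y) powr (- (real DIM('a) + s))) \<partial>lebesgue)
         \<le> ennreal (kernel_tail_const TYPE('a) s * infdist x (meas_boundary E) powr (-s))"
proof -
  have "ball x (infdist x (meas_boundary E)) \<inter> meas_boundary E = {}"
    using infdist_le[of _ "meas_boundary E" x] by (force simp: not_le)
  then have "ball x (infdist x (meas_boundary E)) - E \<in> null_sets lebesgue"
    using E \<delta> dense by (intro ball_diff_null_if_disjoint_meas_boundary)
  then have "AE y in lebesgue. y \<in> - E \<longrightarrow> infdist x (meas_boundary E) \<le> dist x y"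
    by (rule AE_I') (auto simp: not_le)
  then show ?thesis by (rule nn_integral_kernel_far_le[OF s \<delta>])
qed

lemma nbhd_in_0_null:
  fixes \<Gamma> \<Omega> :: "'a::euclidean_space set"
  assumes "open \<Omega>" and a: "0 < a" and \<rho>0: "0 < \<rho>0"
    and thin: "\<And>\<rho>. 0 < \<rho> \<Longrightarrow> \<rho> \<le> \<rho>0 \<Longrightarrow> emeasure lebesgue (nbhd_in \<Gamma> \<Omega> \<rho>) \<le> ennreal (C * \<rho> powr a)"
  shows "nbhd_in \<Gamma> \<Omega> 0 \<in> null_sets lebesgue"
proof -
  have "((\<lambda>\<rho>. ennreal (C * \<rho> powr a)) \<longlongrightarrow> ennreal (C * 0)) (at_right 0)"
    using a by (intro tendsto_ennrealI tendsto_mult tendsto_const tendsto_zero_powrI tendsto_ident_at)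
      (auto simp: eventually_at_right_field intro: exI[of _ 1])
  moreover have "\<forall>\<^sub>F \<rho> in at_right 0. emeasure lebesgue (nbhd_in \<Gamma> \<Omega> 0) \<le> ennreal (C * \<rho> powr a)"
    unfolding eventually_at_right_field
  proof (intro exI[of _ \<rho>0] conjI allI impI)
    fix \<rho> :: real assume "0 < \<rho>" "\<rho> < \<rho>0"
    then have "emeasure lebesgue (nbhd_in \<Gamma> \<Omega> 0) \<le> emeasure lebesgue (nbhd_in \<Gamma> \<Omega> \<rho>)"
      using assms(1) by (intro emeasure_mono) (auto simp: nbhd_in_def)
    also have "\<dots> \<le> ennreal (C * \<rho> powr a)"
      using \<open>0 < \<rho>\<close> \<open>\<rho> < \<rho>0\<close> by (intro thin) auto
    finally show "emeasure lebesgue (nbhd_in \<Gamma> \<Omega> 0) \<le> ennreal (C * \<rho> powr a)" .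
  qed (rule \<rho>0)
  ultimately have "emeasure lebesgue (nbhd_in \<Gamma> \<Omega> 0) \<le> ennreal (C * 0)"
    by (rule tendsto_le[OF trivial_limit_at_right_real _ tendsto_const])
  then show ?thesis
    using assms(1) by (simp add: null_sets_def)
qed

lemma upper_mink_dim_less_imp_nbhd_le:
  fixes \<Gamma> \<Omega> :: "'a::euclidean_space set"
  assumes \<Omega>: "open \<Omega>" "bounded \<Omega>"
    and r: "upper_mink_dim \<Gamma> \<Omega> < ereal r" "0 \<le> r" "r \<le> real DIM('a)"
  obtains C \<rho>0 where "0 \<le> C" "0 < \<rho>0"
    "\<And>\<rho>. 0 < \<rho> \<Longrightarrow> \<rho> \<le> \<rho>0 \<Longrightarrow>
       emeasure lebesgue (nbhd_in \<Gamma> \<Omega> \<rho>) \<le> ennreal (C * \<rho> powr (real DIM('a) - r))"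
proof -
  let ?a = "real DIM('a) - r"
  have "upper_mink_content r \<Gamma> \<Omega> \<noteq> \<infinity>"
  proof
    assume "upper_mink_content r \<Gamma> \<Omega> = \<infinity>"
    then have "ereal r \<le> upper_mink_dim \<Gamma> \<Omega>"
      unfolding upper_mink_dim_def using r(2,3) by (intro Sup_upper) auto
    then show False using r(1) by simp
  qed
  then have "upper_mink_content r \<Gamma> \<Omega> < ereal (real_of_ereal (upper_mink_content r \<Gamma> \<Omega>) + 1)"
    by (cases "upper_mink_content r \<Gamma> \<Omega>") auto
  then obtain M where "upper_mink_content r \<Gamma> \<Omega> < ereal M" by blast
  then have "\<forall>\<^sub>F \<rho> in at_right 0. ereal (measure lebesgue (nbhd_in \<Gamma> \<Omega> \<rho>) / \<rho> powr ?a) < ereal M"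
    unfolding upper_mink_content_def by (rule Limsup_lessD)
  then obtain b where b: "0 < b"
    and M: "\<And>\<rho>. 0 < \<rho> \<Longrightarrow> \<rho> < b \<Longrightarrow> measure lebesgue (nbhd_in \<Gamma> \<Omega> \<rho>) \<le> M * \<rho> powr ?a"
    unfolding eventually_at_right_field by (auto simp: divide_less_eq less_imp_le)
  have "measure lebesgue (nbhd_in \<Gamma> \<Omega> (b / 2)) \<le> M * (b / 2) powr ?a"
    using b by (intro M) auto
  then have "M * (b / 2) powr ?a \<ge> 0"
    using measure_nonneg order_trans by blast
  then have "0 \<le> M" using b by (simp add: zero_le_mult_iff)
  moreover have "emeasure lebesgue (nbhd_in \<Gamma> \<Omega> \<rho>) \<le> ennreal (M * \<rho> powr ?a)"
    if "0 < \<rho>" "\<rho> \<le> b / 2" for \<rho>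
  proof -
    have "nbhd_in \<Gamma> \<Omega> \<rho> \<in> lmeasurable"
      using \<Omega> by (intro bounded_set_imp_lmeasurable nbhd_in_sets_lebesgue)
        (auto intro: bounded_subset simp: nbhd_in_def)
    then show ?thesis
      using M[of \<rho>] that b by (simp add: emeasure_eq_measure2 ennreal_leI)
  qed
  ultimately show ?thesis using b by (intro that[of M "b / 2"]) auto
qed

section \<open>Inner tubes of Lipschitz domains\<close>

lemma measure_le_of_disjoint_translates:
  fixes S B :: "'a::euclidean_space set"
  assumes S: "S \<in> lmeasurable" and B: "B \<in> lmeasurable"
    and disj: "disjoint_family_on (\<lambda>k. (+) (v k) ` S) {..<N}"
    and sub: "(\<Union>k<N. (+) (v k) ` S) \<subseteq> B"
  shows "real N * measure lebesgue S \<le> measure lebesgue B"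
proof -
  have T: "(+) (v k) ` S \<in> lmeasurable" for k
    using S by (rule measurable_translation)
  have "real N * measure lebesgue S = (\<Sum>k<N. measure lebesgue ((+) (v k) ` S))"
    by (simp add: measure_translation)
  also have "\<dots> = measure lebesgue (\<Union>k<N. (+) (v k) ` S)"
    using T disj fmeasurableD2[OF T] by (intro measure_finite_Union[symmetric]) auto
  also have "\<dots> \<le> measure lebesgue B"
    using T B sub by (intro measure_mono_fmeasurable) (auto simp: fmeasurableD)
  finally show ?thesis .
qed

lemma inner_unit_self: "norm e = 1 \<Longrightarrow> e \<bullet> e = 1"
  by (simp add: power2_norm_eq_inner[symmetric])

lemma inner_scaleR_unit_add:
  fixes e x :: "'a::euclidean_space"
  assumes "norm e = 1"
  shows "(c *\<^sub>R e + x) \<bullet> e = c + x \<bullet> e"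
  using assms by (simp add: inner_add_left inner_unit_self)

lemma hyperplane_proj_scaleR_unit_add:
  fixes e x :: "'a::euclidean_space"
  assumes "norm e = 1"
  shows "(c *\<^sub>R e + x) - ((c *\<^sub>R e + x) \<bullet> e) *\<^sub>R e = x - (x \<bullet> e) *\<^sub>R e"
  using assms by (simp add: inner_scaleR_unit_add inner_unit_self algebra_simps scaleR_add_left)

lemma hyperplane_proj_orthogonal:
  fixes e x :: "'a::euclidean_space"
  assumes "norm e = 1"
  shows "(x - (x \<bullet> e) *\<^sub>R e) \<bullet> e = 0"
  using assms by (simp add: inner_diff_left inner_unit_self)

lemma norm_hyperplane_proj_le:
  fixes e v :: "'a::euclidean_space"
  assumes "norm e = 1"
  shows "norm (v - (v \<bullet> e) *\<^sub>R e) \<le> norm v"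
proof -
  have "(v - (v \<bullet> e) *\<^sub>R e) \<bullet> (v - (v \<bullet> e) *\<^sub>R e) = v \<bullet> v - (v \<bullet> e) * (v \<bullet> e)"
    using inner_unit_self[OF assms] by (simp add: inner_diff_left inner_diff_right inner_commute algebra_simps)
  also have "\<dots> \<le> v \<bullet> v" by simp
  finally show ?thesis by (simp add: norm_le)
qed

lemma continuous_on_graph_height:
  fixes e :: "'a::euclidean_space"
  assumes e: "norm e = 1" and \<gamma>: "L-lipschitz_on {w. w \<bullet> e = 0} \<gamma>"
  shows "continuous_on UNIV (\<lambda>y. \<gamma> (y - (y \<bullet> e) *\<^sub>R e))"
  by (rule continuous_on_compose2[OF lipschitz_on_continuous_on[OF \<gamma>]])
    (auto intro!: continuous_intros simp: hyperplane_proj_orthogonal[OF e])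

definition graph_slab :: "'a::euclidean_space \<Rightarrow> real \<Rightarrow> 'a \<Rightarrow> ('a \<Rightarrow> real) \<Rightarrow> real \<Rightarrow> 'a set" where
  "graph_slab z r e \<gamma> h =
     {y \<in> ball z r. \<gamma> (y - (y \<bullet> e) *\<^sub>R e) < y \<bullet> e \<and> y \<bullet> e \<le> \<gamma> (y - (y \<bullet> e) *\<^sub>R e) + h}"

lemma graph_slab_lmeasurable:
  fixes e :: "'a::euclidean_space"
  assumes e: "norm e = 1" and \<gamma>: "L-lipschitz_on {w. w \<bullet> e = 0} \<gamma>"
  shows "graph_slab z r e \<gamma> h \<in> lmeasurable"
proof (rule bounded_set_imp_lmeasurable)
  let ?g = "\<lambda>y. \<gamma> (y - (y \<bullet> e) *\<^sub>R e)"
  have c: "continuous_on UNIV ?g" by (rule continuous_on_graph_height[OF e \<gamma>])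
  have "graph_slab z r e \<gamma> h = ball z r \<inter> {y. ?g y < y \<bullet> e} \<inter> {y. y \<bullet> e \<le> ?g y + h}"
    by (auto simp: graph_slab_def)
  moreover have "open {y. ?g y < y \<bullet> e}" "closed {y. y \<bullet> e \<le> ?g y + h}"
    by (intro open_Collect_less closed_Collect_le c continuous_intros)+
  ultimately show "graph_slab z r e \<gamma> h \<in> sets lebesgue"
    by (simp add: borel_open borel_closed sets_completionI_sets)
  show "bounded (graph_slab z r e \<gamma> h)"
    by (rule bounded_subset[of "ball z r"]) (auto simp: graph_slab_def)
qed

lemma graph_slab_translate_bounds:
  fixes e y :: "'a::euclidean_space"
  assumes e: "norm e = 1" and t: "0 \<le> t" and y: "y \<in> (+) (t *\<^sub>R e) ` graph_slab z r e \<gamma> h"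
  shows "t < y \<bullet> e - \<gamma> (y - (y \<bullet> e) *\<^sub>R e)" "y \<bullet> e - \<gamma> (y - (y \<bullet> e) *\<^sub>R e) \<le> t + h"
    and "dist z y < r + t"
proof -
  from y obtain x where x: "x \<in> graph_slab z r e \<gamma> h" "y = t *\<^sub>R e + x" by auto
  have "y \<bullet> e = t + x \<bullet> e" "y - (y \<bullet> e) *\<^sub>R e = x - (x \<bullet> e) *\<^sub>R e"
    unfolding x(2) using e by (rule inner_scaleR_unit_add hyperplane_proj_scaleR_unit_add)+
  moreover have "dist z y \<le> dist z x + dist x y" by (rule dist_triangle)
  moreover have "dist x y = t" using x(2) e t by (simp add: dist_norm)
  ultimately show "t < y \<bullet> e - \<gamma> (y - (y \<bullet> e) *\<^sub>R e)" "y \<bullet> e - \<gamma> (y - (y \<bullet> e) *\<^sub>R e) \<le> t + h"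
    and "dist z y < r + t"
    using x(1) by (auto simp: graph_slab_def)
qed

text \<open>About \<open>1/(2h)\<close> disjoint translates of the slab by multiples of \<open>h e\<close> fit into \<open>ball z (r + 1)\<close>.\<close>
lemma emeasure_graph_slab_le:
  fixes z e :: "'a::euclidean_space"
  assumes e: "norm e = 1" and \<gamma>: "L-lipschitz_on {w. w \<bullet> e = 0} \<gamma>" and h: "0 < h" "h \<le> 1/2"
  shows "emeasure lebesgue (graph_slab z r e \<gamma> h) \<le> ennreal (2 * measure lebesgue (ball z (r + 1)) * h)"
proof -
  define S where "S = graph_slab z r e \<gamma> h"
  define N where "N = nat \<lfloor>1 / h\<rfloor>"
  define T where "T k = (+) ((real k * h) *\<^sub>R e) ` S" for k :: nat
  have T: "real k * h < y \<bullet> e - \<gamma> (y - (y \<bullet> e) *\<^sub>R e)"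
    "y \<bullet> e - \<gamma> (y - (y \<bullet> e) *\<^sub>R e) \<le> real k * h + h" "dist z y < r + real k * h"
    if "y \<in> T k" for k y
    using graph_slab_translate_bounds[OF e _ that[unfolded T_def S_def]] h by auto
  have S: "S \<in> lmeasurable" unfolding S_def using e \<gamma> by (rule graph_slab_lmeasurable)
  have "disjoint_family_on T {..<N}"
    unfolding disjoint_family_on_def
  proof (intro ballI impI)
    fix j k :: nat assume "j \<noteq> k"
    show "T j \<inter> T k = {}"
    proof (rule ccontr)
      assume "T j \<inter> T k \<noteq> {}"
      then obtain y where "y \<in> T j" "y \<in> T k" by blast
      then have "real k * h < (real j + 1) * h" "real j * h < (real k + 1) * h"
        using T[OF \<open>y \<in> T j\<close>] T[OF \<open>y \<in> T k\<close>] by (auto simp: distrib_right)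
      then show False
        using h(1) \<open>j \<noteq> k\<close> by (simp add: mult_less_cancel_right_pos)
    qed
  qed
  have N: "real N * h \<le> 1" "1 / (2 * h) \<le> real N"
  proof -
    have N_eq: "real N = of_int \<lfloor>1 / h\<rfloor>" using h by (simp add: N_def)
    have "real N \<le> 1 / h" unfolding N_eq by (rule of_int_floor_le)
    then show "real N * h \<le> 1" using h by (simp add: field_simps)
    show "1 / (2 * h) \<le> real N" using h floor_correct[of "1 / h"] by (simp add: N_eq field_simps)
  qed
  have "(\<Union>k<N. T k) \<subseteq> ball z (r + 1)"
  proof
    fix y assume "y \<in> (\<Union>k<N. T k)"
    then obtain k where k: "k < N" "y \<in> T k" by auto
    have "(real k + 1) * h \<le> real N * h"
      using k(1) h by (intro mult_right_mono) auto
    then show "y \<in> ball z (r + 1)" using T(3)[OF k(2)] N(1) h by (simp add: algebra_simps)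
  qed
  with \<open>disjoint_family_on T {..<N}\<close> have "real N * measure lebesgue S \<le> measure lebesgue (ball z (r + 1))"
    unfolding T_def by (intro measure_le_of_disjoint_translates S) auto
  moreover have "measure lebesgue S * (1 / (2 * h)) \<le> measure lebesgue S * real N"
    using N(2) by (intro mult_left_mono) auto
  ultimately have "measure lebesgue S * (1 / (2 * h)) \<le> measure lebesgue (ball z (r + 1))"
    by (simp add: mult.commute)
  then show ?thesis
    using S h by (simp add: S_def emeasure_eq_measure2 ennreal_leI field_simps)
qed

definition lipschitz_chart :: "'a::euclidean_space set \<Rightarrow> 'a \<Rightarrow> real \<Rightarrow> 'a \<Rightarrow> real \<Rightarrow> ('a \<Rightarrow> real) \<Rightarrow> bool" where
  "lipschitz_chart \<Omega> z r e L \<gamma> \<longleftrightarrow> 0 < r \<and> norm e = 1 \<and> L-lipschitz_on {w. w \<bullet> e = 0} \<gamma> \<and>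
     \<Omega> \<inter> ball z r = {y \<in> ball z r. y \<bullet> e > \<gamma> (y - (y \<bullet> e) *\<^sub>R e)}"

lemma lipschitz_boundary_finite_charts:
  fixes \<Omega> :: "'a::euclidean_space set"
  assumes "bounded \<Omega>" "lipschitz_boundary \<Omega>"
  obtains F R e L \<gamma> where "finite F" "frontier \<Omega> \<subseteq> (\<Union>i\<in>F. ball i (R i / 2))"
    and "\<And>i. i \<in> F \<Longrightarrow> lipschitz_chart \<Omega> i (R i) (e i) (L i) (\<gamma> i)"
proof -
  have "\<forall>x\<in>frontier \<Omega>. \<exists>r e \<gamma> L. lipschitz_chart \<Omega> x r e L \<gamma>"
    using assms(2) unfolding lipschitz_boundary_def lipschitz_chart_def by blast
  then obtain R where "\<forall>x\<in>frontier \<Omega>. \<exists>e \<gamma> L. lipschitz_chart \<Omega> x (R x) e L \<gamma>" by (metis bchoice)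
  then obtain e where "\<forall>x\<in>frontier \<Omega>. \<exists>\<gamma> L. lipschitz_chart \<Omega> x (R x) (e x) L \<gamma>" by (metis bchoice)
  then obtain \<gamma> where "\<forall>x\<in>frontier \<Omega>. \<exists>L. lipschitz_chart \<Omega> x (R x) (e x) L (\<gamma> x)" by (metis bchoice)
  then obtain L where chart: "\<forall>x\<in>frontier \<Omega>. lipschitz_chart \<Omega> x (R x) (e x) (L x) (\<gamma> x)"
    by (metis bchoice)
  obtain F where F: "F \<subseteq> frontier \<Omega>" "finite F" "frontier \<Omega> \<subseteq> (\<Union>i\<in>F. ball i (R i / 2))"
    by (rule compactE_image[OF compact_frontier_bounded[OF assms(1)], of "frontier \<Omega>"
        "\<lambda>x. ball x (R x / 2)"]) (use chart in \<open>auto simp: lipschitz_chart_def\<close>)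
  show ?thesis
    using F chart by (intro that[of F R e L \<gamma>]) auto
qed

text \<open>Compared with the exterior point \<open>w\<close>, which lies below the graph, the height of \<open>x\<close> grows by at
  most \<open>\<rho>\<close> and the graph value drops by at most \<open>L \<rho>\<close>.\<close>
lemma mem_graph_slab_if_close_to_exterior:
  fixes x w :: "'a::euclidean_space"
  assumes chart: "lipschitz_chart \<Omega> i R e L \<gamma>"
    and x: "x \<in> \<Omega>" "x \<in> ball i R" and w: "w \<notin> \<Omega>" "w \<in> ball i R" and xw: "dist x w \<le> \<rho>"
  shows "x \<in> graph_slab i R e \<gamma> ((1 + L) * \<rho>)"
proof -
  let ?P = "\<lambda>y. y - (y \<bullet> e) *\<^sub>R e"
  have e: "norm e = 1" and \<gamma>: "L-lipschitz_on {z. z \<bullet> e = 0} \<gamma>"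
    and \<Omega>: "\<Omega> \<inter> ball i R = {y \<in> ball i R. y \<bullet> e > \<gamma> (?P y)}"
    using chart by (auto simp: lipschitz_chart_def)
  have L: "0 \<le> L"
    using \<gamma> by (rule lipschitz_on_nonneg)
  have "x \<in> {y \<in> ball i R. y \<bullet> e > \<gamma> (?P y)}"
    unfolding \<Omega>[symmetric] using x by blast
  then have above: "\<gamma> (?P x) < x \<bullet> e" by simp
  have "w \<notin> {y \<in> ball i R. y \<bullet> e > \<gamma> (?P y)}"
    unfolding \<Omega>[symmetric] using w by blast
  then have below: "w \<bullet> e \<le> \<gamma> (?P w)" using w(2) by simp
  have "\<bar>(x - w) \<bullet> e\<bar> \<le> dist x w"
    using Cauchy_Schwarz_ineq2[of "x - w" e] e by (simp add: dist_norm)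
  then have height: "x \<bullet> e - w \<bullet> e \<le> \<rho>"
    using xw by (simp add: inner_diff_left)
  have proj_diff: "?P w - ?P x = ?P (w - x)"
    by (simp add: inner_diff_left scaleR_diff_left algebra_simps)
  have "dist (?P w) (?P x) \<le> dist x w"
    unfolding dist_norm proj_diff norm_minus_commute[of x w] by (rule norm_hyperplane_proj_le[OF e])
  then have "L * dist (?P w) (?P x) \<le> L * \<rho>"
    using xw L by (intro mult_left_mono) auto
  moreover have "dist (\<gamma> (?P w)) (\<gamma> (?P x)) \<le> L * dist (?P w) (?P x)"
    using \<gamma> by (rule lipschitz_onD) (auto simp: hyperplane_proj_orthogonal[OF e])
  ultimately have graph: "\<gamma> (?P w) - \<gamma> (?P x) \<le> L * \<rho>"
    by (simp add: dist_real_def)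
  have "(1 + L) * \<rho> = \<rho> + L * \<rho>" by (simp add: distrib_right)
  then have "x \<bullet> e \<le> \<gamma> (?P x) + (1 + L) * \<rho>"
    using below height graph by linarith
  then show ?thesis
    using above x(2) by (simp add: graph_slab_def)
qed

lemma exists_frontier_point_near:
  fixes \<Omega> :: "'a::euclidean_space set"
  assumes "open \<Omega>" "bounded \<Omega>" and x: "x \<in> nbhd_in (- \<Omega>) \<Omega> \<rho>"
  obtains w where "w \<in> frontier \<Omega>" "dist x w \<le> \<rho>"
proof -
  have "\<Omega> \<noteq> UNIV" using assms(2) not_bounded_UNIV by auto
  then have "- \<Omega> \<noteq> {}" by auto
  then obtain y where y: "y \<notin> \<Omega>" "infdist x (- \<Omega>) = dist x y"
    using infdist_attains_inf[of "- \<Omega>" x] assms(1) by auto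
  have "closed_segment x y \<inter> frontier \<Omega> \<noteq> {}"
    using x y by (intro connected_Int_frontier) (auto simp: nbhd_in_def)
  then obtain w where w: "w \<in> closed_segment x y" "w \<in> frontier \<Omega>" by auto
  have "dist x w \<le> dist x y"
    using dist_in_closed_segment[OF w(1)] by (simp add: dist_commute)
  then show ?thesis
    using that w(2) x y(2) by (simp add: nbhd_in_def)
qed

lemma nbhd_in_compl_subset_graph_slabs:
  fixes \<Omega> :: "'a::euclidean_space set"
  assumes "open \<Omega>" "bounded \<Omega>" and cover: "frontier \<Omega> \<subseteq> (\<Union>i\<in>F. ball i (R i / 2))"
    and chart: "\<And>i. i \<in> F \<Longrightarrow> lipschitz_chart \<Omega> i (R i) (e i) (L i) (\<gamma> i)"
    and \<rho>: "\<And>i. i \<in> F \<Longrightarrow> \<rho> \<le> R i / 2"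
  shows "nbhd_in (- \<Omega>) \<Omega> \<rho> \<subseteq> (\<Union>i\<in>F. graph_slab i (R i) (e i) (\<gamma> i) ((1 + L i) * \<rho>))"
proof
  fix x assume x: "x \<in> nbhd_in (- \<Omega>) \<Omega> \<rho>"
  obtain w where w: "w \<in> frontier \<Omega>" "dist x w \<le> \<rho>"
    by (rule exists_frontier_point_near[OF assms(1,2) x])
  obtain i where i: "i \<in> F" "w \<in> ball i (R i / 2)" using cover w(1) by auto
  have "dist i x \<le> dist i w + dist w x" by (rule dist_triangle)
  then have "x \<in> ball i (R i)"
    using i(2) w(2) \<rho>[OF i(1)] by (simp add: dist_commute)
  moreover have "w \<in> ball i (R i)" using i(2) chart[OF i(1)] by (simp add: lipschitz_chart_def)
  moreover have "w \<notin> \<Omega>" using w(1) assms(1) by (simp add: frontier_def interior_open)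
  ultimately have "x \<in> graph_slab i (R i) (e i) (\<gamma> i) ((1 + L i) * \<rho>)"
    using chart[OF i(1)] x w(2) by (intro mem_graph_slab_if_close_to_exterior) (auto simp: nbhd_in_def)
  then show "x \<in> (\<Union>i\<in>F. graph_slab i (R i) (e i) (\<gamma> i) ((1 + L i) * \<rho>))" using i(1) by blast
qed

lemma emeasure_inner_tube_le:
  fixes \<Omega> :: "'a::euclidean_space set"
  assumes "open \<Omega>" "bounded \<Omega>" "lipschitz_boundary \<Omega>"
  obtains C \<rho>0 where "0 \<le> C" "0 < \<rho>0"
    "\<And>\<rho>. 0 < \<rho> \<Longrightarrow> \<rho> \<le> \<rho>0 \<Longrightarrow> emeasure lebesgue (nbhd_in (- \<Omega>) \<Omega> \<rho>) \<le> ennreal (C * \<rho>)"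
proof -
  obtain F R e L \<gamma> where F: "finite F" "frontier \<Omega> \<subseteq> (\<Union>i\<in>F. ball i (R i / 2))"
    and chart: "\<And>i. i \<in> F \<Longrightarrow> lipschitz_chart \<Omega> i (R i) (e i) (L i) (\<gamma> i)"
    using lipschitz_boundary_finite_charts[OF assms(2,3)] by blast
  have chart': "0 < R i" "norm (e i) = 1" "(L i)-lipschitz_on {z. z \<bullet> e i = 0} (\<gamma> i)" "0 \<le> L i"
    if "i \<in> F" for i
    using chart[OF that] lipschitz_on_nonneg by (auto simp: lipschitz_chart_def)
  define \<rho>0 where "\<rho>0 = Min (insert 1 ((\<lambda>i. min (R i / 2) (1 / (2 * (1 + L i)))) ` F))"
  define C where "C = (\<Sum>i\<in>F. 2 * measure lebesgue (ball i (R i + 1)) * (1 + L i))"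
  have "0 < \<rho>0"
    unfolding \<rho>0_def using F(1) chart' by (subst Min_gr_iff) (auto simp: add_pos_nonneg)
  have \<rho>0_le: "\<rho>0 \<le> R i / 2" "(1 + L i) * \<rho>0 \<le> 1 / 2" if "i \<in> F" for i
  proof -
    have "\<rho>0 \<le> min (R i / 2) (1 / (2 * (1 + L i)))"
      unfolding \<rho>0_def using F(1) that by (intro Min_le) auto
    then show "\<rho>0 \<le> R i / 2" "(1 + L i) * \<rho>0 \<le> 1 / 2"
      using chart'(4)[OF that] by (auto simp: field_simps)
  qed
  show ?thesis
  proof (rule that)
    show "0 \<le> C" unfolding C_def using chart' by (intro sum_nonneg) auto
    show "0 < \<rho>0" by fact
    fix \<rho> assume \<rho>: "0 < \<rho>" "\<rho> \<le> \<rho>0"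
    define S where "S i = graph_slab i (R i) (e i) (\<gamma> i) ((1 + L i) * \<rho>)" for i
    have S: "S i \<in> sets lebesgue" if "i \<in> F" for i
      unfolding S_def using chart'[OF that] by (intro fmeasurableD graph_slab_lmeasurable) auto
    have "nbhd_in (- \<Omega>) \<Omega> \<rho> \<subseteq> (\<Union>i\<in>F. S i)"
      unfolding S_def using assms(1,2) F(2) chart \<rho>(2) \<rho>0_le(1)
      by (intro nbhd_in_compl_subset_graph_slabs) force+
    then have "emeasure lebesgue (nbhd_in (- \<Omega>) \<Omega> \<rho>) \<le> emeasure lebesgue (\<Union>i\<in>F. S i)"
      using S by (intro emeasure_mono sets.finite_UN F(1)) auto
    also have "\<dots> \<le> (\<Sum>i\<in>F. emeasure lebesgue (S i))"
      using S F(1) by (intro emeasure_subadditive_finite) auto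
    also have "\<dots> \<le> (\<Sum>i\<in>F. ennreal (2 * measure lebesgue (ball i (R i + 1)) * ((1 + L i) * \<rho>)))"
    proof (rule sum_mono)
      fix i assume i: "i \<in> F"
      have "(1 + L i) * \<rho> \<le> (1 + L i) * \<rho>0"
        using \<rho> chart'(4)[OF i] by (intro mult_left_mono) auto
      with \<rho>0_le(2)[OF i] have "(1 + L i) * \<rho> \<le> 1 / 2" by linarith
      then show "emeasure lebesgue (S i) \<le> ennreal (2 * measure lebesgue (ball i (R i + 1)) * ((1 + L i) * \<rho>))"
        unfolding S_def using chart'[OF i] \<rho>
        by (intro emeasure_graph_slab_le) (auto simp: add_pos_nonneg)
    qed
    also have "\<dots> = ennreal (C * \<rho>)"
      using chart'(4) \<rho> by (simp add: C_def sum_distrib_right mult.assoc sum_ennreal)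
    finally show "emeasure lebesgue (nbhd_in (- \<Omega>) \<Omega> \<rho>) \<le> ennreal (C * \<rho>)" .
  qed
qed

section \<open>Fractional perimeter\<close>

lemma Ls_mono:
  assumes "A \<subseteq> A'" "B \<subseteq> B'"
  shows "Ls s A B \<le> Ls s A' B'"
  unfolding Ls_def
  by (intro nn_integral_mono mult_mono) (use assms in \<open>auto simp: indicator_def\<close>)

lemma Ls_commute:
  fixes A B :: "'a::euclidean_space set"
  assumes [measurable]: "A \<in> sets borel" "B \<in> sets borel"
  shows "Ls s A B = Ls s B A"
proof -
  define k where "k x y = ennreal (norm (x - y) powr (- (real DIM('a) + s)))" for x y :: 'a
  have k_commute: "k x y = k y x" for x y by (simp add: k_def norm_minus_commute)
  have "Ls s A B = (\<integral>\<^sup>+ x. (\<integral>\<^sup>+ y. k x y * indicator B y * indicator A x \<partial>lborel) \<partial>lborel)"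
    unfolding Ls_def nn_integral_completion k_def
    by (intro nn_integral_cong nn_integral_multc[symmetric]) measurable
  also have "\<dots> = (\<integral>\<^sup>+ y. (\<integral>\<^sup>+ x. k x y * indicator B y * indicator A x \<partial>lborel) \<partial>lborel)"
    by (rule lborel_pair.Fubini') (simp add: k_def)
  also have "\<dots> = Ls s B A"
    unfolding Ls_def nn_integral_completion k_def[symmetric]
  proof (intro nn_integral_cong)
    fix y
    have "(\<integral>\<^sup>+ x. k x y * indicator B y * indicator A x \<partial>lborel)
        = (\<integral>\<^sup>+ x. k y x * indicator A x * indicator B y \<partial>lborel)"
      by (simp add: k_commute mult_ac)
    also have "\<dots> = (\<integral>\<^sup>+ x. k y x * indicator A x \<partial>lborel) * indicator B y"
      by (rule nn_integral_multc) (simp add: k_def)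
    finally show "(\<integral>\<^sup>+ x. k x y * indicator B y * indicator A x \<partial>lborel)
        = (\<integral>\<^sup>+ x. k y x * indicator A x \<partial>lborel) * indicator B y" .
  qed
  finally show ?thesis .
qed

lemma Ls_le_nn_integral_infdist:
  fixes A B :: "'a::euclidean_space set"
  assumes A [measurable]: "A \<in> sets lebesgue" and B: "closed B" "B \<noteq> {}" "A \<inter> B = {}" and s: "0 < s"
  shows "Ls s A B \<le> ennreal (kernel_tail_const TYPE('a) s) * (\<integral>\<^sup>+x\<in>A. ennreal (infdist x B powr (-s)) \<partial>lebesgue)"
proof -
  have "Ls s A B \<le> (\<integral>\<^sup>+x. ennreal (kernel_tail_const TYPE('a) s) * (ennreal (infdist x B powr (-s)) * indicator A x) \<partial>lebesgue)"
    unfolding Ls_def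
  proof (intro nn_integral_mono)
    fix x :: 'a
    show "(\<integral>\<^sup>+y\<in>B. ennreal (norm (x - y) powr (- (real DIM('a) + s))) \<partial>lebesgue) * indicator A x
        \<le> ennreal (kernel_tail_const TYPE('a) s) * (ennreal (infdist x B powr (-s)) * indicator A x)"
    proof (cases "x \<in> A")
      case True
      then have "0 < infdist x B"
        using B by (intro infdist_pos_not_in_closed) auto
      then have "(\<integral>\<^sup>+y\<in>B. ennreal (norm (x - y) powr (- (real DIM('a) + s))) \<partial>lebesgue)
          \<le> ennreal (kernel_tail_const TYPE('a) s * infdist x B powr (-s))"
        using s by (intro nn_integral_kernel_far_le AE_I2) (auto intro: infdist_le)
      then show ?thesis
        using True kernel_tail_const_nonneg[OF s, where 'a='a] by (simp add: ennreal_mult)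
    qed simp
  qed
  also have "\<dots> = ennreal (kernel_tail_const TYPE('a) s) * (\<integral>\<^sup>+x\<in>A. ennreal (infdist x B powr (-s)) \<partial>lebesgue)"
    by (rule nn_integral_cmult) measurable
  finally show ?thesis .
qed

lemma Ls_compl_lipschitz_domain_finite:
  fixes \<Omega> :: "'a::euclidean_space set"
  assumes \<Omega>: "open \<Omega>" "bounded \<Omega>" "lipschitz_boundary \<Omega>" and s: "0 < s" "s < 1"
  shows "Ls s \<Omega> (- \<Omega>) < \<infinity>"
proof -
  obtain C \<rho>0 where C: "0 \<le> C" "0 < \<rho>0"
    and tube: "\<And>\<rho>. 0 < \<rho> \<Longrightarrow> \<rho> \<le> \<rho>0 \<Longrightarrow> emeasure lebesgue (nbhd_in (- \<Omega>) \<Omega> \<rho>) \<le> ennreal (C * \<rho>)"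
    using emeasure_inner_tube_le[OF \<Omega>] by blast
  have tube': "emeasure lebesgue (nbhd_in (- \<Omega>) \<Omega> \<rho>) \<le> ennreal (C * \<rho> powr 1)"
    if "0 < \<rho>" "\<rho> \<le> \<rho>0" for \<rho>
    using tube[OF that] that(1) by simp
  have "\<Omega> \<noteq> UNIV" using \<Omega>(2) not_bounded_UNIV by auto
  then have "Ls s \<Omega> (- \<Omega>) \<le> ennreal (kernel_tail_const TYPE('a) s) * (\<integral>\<^sup>+x\<in>\<Omega>. ennreal (infdist x (- \<Omega>) powr (-s)) \<partial>lebesgue)"
    using \<Omega>(1) s(1) by (intro Ls_le_nn_integral_infdist) auto
  also have "\<dots> < \<infinity>"
    using nn_integral_infdist_powr_finite[OF \<Omega>(1,2) s C(2,1) tube'] by (simp add: ennreal_mult_less_top)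
  finally show ?thesis .
qed

lemma AE_nn_integral_kernel_compl_le_infdist:
  fixes E \<Omega> :: "'a::euclidean_space set"
  assumes E: "E \<in> sets lebesgue" and s: "0 < s"
    and null: "nbhd_in (meas_boundary E) \<Omega> 0 \<in> null_sets lebesgue"
  shows "AE x in lebesgue. x \<in> E \<inter> \<Omega> \<longrightarrow>
    (\<integral>\<^sup>+y\<in>- E. ennreal (norm (x - y) powr (- (real DIM('a) + s))) \<partial>lebesgue)
      \<le> ennreal (kernel_tail_const TYPE('a) s * infdist x (meas_boundary E) powr (-s))"
proof -
  define V where "V = {z. \<exists>r>0. E \<inter> ball z r \<in> null_sets lebesgue}"
  have "E \<inter> V \<in> null_sets lebesgue"
    unfolding V_def by (rule locally_null_imp_null) blast
  with null have "AE x in lebesgue. x \<notin> nbhd_in (meas_boundary E) \<Omega> 0 \<union> (E \<inter> V)"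
    by (intro AE_not_in null_sets.Un)
  then show ?thesis
  proof eventually_elim
    case (elim x)
    show ?case
    proof
      assume x: "x \<in> E \<inter> \<Omega>"
      then have "0 < infdist x (meas_boundary E)"
        using elim infdist_nonneg[of x "meas_boundary E"] by (auto simp: nbhd_in_def)
      moreover have "E \<inter> ball x r \<notin> null_sets lebesgue" if "r > 0" for r
        using elim x that by (auto simp: V_def)
      ultimately show "(\<integral>\<^sup>+y\<in>- E. ennreal (norm (x - y) powr (- (real DIM('a) + s))) \<partial>lebesgue)
          \<le> ennreal (kernel_tail_const TYPE('a) s * infdist x (meas_boundary E) powr (-s))"
        using E s by (intro nn_integral_kernel_compl_le_infdist)
    qed
  qed
qed

lemma Ls_inside_finite:
  fixes E \<Omega> :: "'a::euclidean_space set"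
  assumes \<Omega>: "open \<Omega>" "bounded \<Omega>" and E: "E \<in> sets lebesgue" and s: "0 < s" "s < a"
    and \<rho>0: "0 < \<rho>0" and C: "0 \<le> C"
    and thin: "\<And>\<rho>. 0 < \<rho> \<Longrightarrow> \<rho> \<le> \<rho>0 \<Longrightarrow>
      emeasure lebesgue (nbhd_in (meas_boundary E) \<Omega> \<rho>) \<le> ennreal (C * \<rho> powr a)"
  shows "Ls s (E \<inter> \<Omega>) (- E \<inter> \<Omega>) < \<infinity>"
proof -
  let ?\<Gamma> = "meas_boundary E" and ?K = "kernel_tail_const TYPE('a) s"
  have "0 < a" using s by linarith
  then have "nbhd_in ?\<Gamma> \<Omega> 0 \<in> null_sets lebesgue"
    by (rule nbhd_in_0_null[OF \<Omega>(1) _ \<rho>0 thin])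
  then have "AE x in lebesgue. x \<in> E \<inter> \<Omega> \<longrightarrow>
      (\<integral>\<^sup>+y\<in>- E. ennreal (norm (x - y) powr (- (real DIM('a) + s))) \<partial>lebesgue)
        \<le> ennreal (?K * infdist x ?\<Gamma> powr (-s))"
    by (rule AE_nn_integral_kernel_compl_le_infdist[OF E s(1)])
  then have "AE x in lebesgue.
      (\<integral>\<^sup>+y\<in>- E \<inter> \<Omega>. ennreal (norm (x - y) powr (- (real DIM('a) + s))) \<partial>lebesgue) * indicator (E \<inter> \<Omega>) x
      \<le> ennreal ?K * (ennreal (infdist x ?\<Gamma> powr (-s)) * indicator \<Omega> x)"
  proof eventually_elim
    case (elim x)
    have "(\<integral>\<^sup>+y\<in>- E \<inter> \<Omega>. ennreal (norm (x - y) powr (- (real DIM('a) + s))) \<partial>lebesgue)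
        \<le> (\<integral>\<^sup>+y\<in>- E. ennreal (norm (x - y) powr (- (real DIM('a) + s))) \<partial>lebesgue)"
      by (intro nn_integral_mono) (simp split: split_indicator)
    with elim show ?case
      using kernel_tail_const_nonneg[OF s(1), where 'a='a]
      by (auto simp: ennreal_mult split: split_indicator)
  qed
  then have "Ls s (E \<inter> \<Omega>) (- E \<inter> \<Omega>)
      \<le> (\<integral>\<^sup>+x. ennreal ?K * (ennreal (infdist x ?\<Gamma> powr (-s)) * indicator \<Omega> x) \<partial>lebesgue)"
    unfolding Ls_def by (rule nn_integral_mono_AE)
  also have "\<dots> = ennreal ?K * (\<integral>\<^sup>+x\<in>\<Omega>. ennreal (infdist x ?\<Gamma> powr (-s)) \<partial>lebesgue)"
    using \<Omega>(1) by (intro nn_integral_cmult) measurable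
  also have "\<dots> < \<infinity>"
    using nn_integral_infdist_powr_finite[OF \<Omega> s \<rho>0 C thin] by (simp add: ennreal_mult_less_top)
  finally show ?thesis .
qed

lemma Ls_inside_finite_if_upper_mink_dim_less:
  fixes E \<Omega> :: "'a::euclidean_space set"
  assumes "open \<Omega>" "bounded \<Omega>" "E \<in> sets lebesgue" and s: "0 < s"
    and d: "upper_mink_dim (meas_boundary E) \<Omega> = ereal d" "0 \<le> d" "s < real DIM('a) - d"
  shows "Ls s (E \<inter> \<Omega>) (- E \<inter> \<Omega>) < \<infinity>"
proof -
  define r where "r = (d + (real DIM('a) - s)) / 2"
  have r: "d < r" "0 \<le> r" "r \<le> real DIM('a)" "s < real DIM('a) - r"
    using d s by (auto simp: r_def field_simps)
  obtain C \<rho>0 where "0 \<le> C" "0 < \<rho>0" and "\<And>\<rho>. 0 < \<rho> \<Longrightarrow> \<rho> \<le> \<rho>0 \<Longrightarrow>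
      emeasure lebesgue (nbhd_in (meas_boundary E) \<Omega> \<rho>) \<le> ennreal (C * \<rho> powr (real DIM('a) - r))"
    using upper_mink_dim_less_imp_nbhd_le[OF assms(1,2) _ r(2,3), of "meas_boundary E"] d(1) r(1) by auto
  then show ?thesis
    using assms(1-3) s r(4) by (intro Ls_inside_finite) auto
qed

lemma Ps_le_inside_plus_across:
  fixes E \<Omega> :: "'a::euclidean_space set"
  assumes "open \<Omega>"
  shows "Ps s E \<Omega> \<le> Ls s (E \<inter> \<Omega>) (- E \<inter> \<Omega>) + 2 * Ls s \<Omega> (- \<Omega>)"
proof -
  have "Ls s (E \<inter> \<Omega>) (- E - \<Omega>) \<le> Ls s \<Omega> (- \<Omega>)"
    by (rule Ls_mono) auto
  moreover have "Ls s (E - \<Omega>) (- E \<inter> \<Omega>) \<le> Ls s (- \<Omega>) \<Omega>"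
    by (rule Ls_mono) auto
  moreover have "Ls s (- \<Omega>) \<Omega> = Ls s \<Omega> (- \<Omega>)"
    using assms by (intro Ls_commute) (auto intro: borel_open borel_closed)
  ultimately show ?thesis
    unfolding Ps_def mult_2 by (metis add.assoc add_mono order_refl)
qed

theorem corollary3p5:
  fixes \<Omega> E :: "'a::euclidean_space set"
  assumes "open \<Omega>" and "bounded \<Omega>" and "lipschitz_boundary \<Omega>"
    and "E \<in> sets lebesgue"
    and "meas_boundary E \<inter> \<Omega> \<noteq> {}"
    and "ereal (real DIM('a) - 1) \<le> upper_mink_dim (meas_boundary E) \<Omega>"
    and "upper_mink_dim (meas_boundary E) \<Omega> < ereal (real DIM('a))"
  shows "\<forall>s. 0 < s \<and> ereal s < ereal (real DIM('a)) - upper_mink_dim (meas_boundary E) \<Omega>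
             \<longrightarrow> Ps s E \<Omega> < \<infinity>"
proof (intro allI impI)
  fix s :: real
  assume s: "0 < s \<and> ereal s < ereal (real DIM('a)) - upper_mink_dim (meas_boundary E) \<Omega>"
  obtain d where d: "upper_mink_dim (meas_boundary E) \<Omega> = ereal d"
    using assms(6,7) by (cases "upper_mink_dim (meas_boundary E) \<Omega>") auto
  have "real DIM('a) - 1 \<le> d" "s < real DIM('a) - d"
    using assms(6) s by (auto simp: d)
  moreover have "1 \<le> real DIM('a)" using DIM_positive[where 'a='a] by (simp add: Suc_le_eq)
  ultimately have "0 \<le> d" "s < real DIM('a) - d" "s < 1" by linarith+
  with s have "Ls s (E \<inter> \<Omega>) (- E \<inter> \<Omega>) < \<infinity>" "Ls s \<Omega> (- \<Omega>) < \<infinity>"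
    using Ls_inside_finite_if_upper_mink_dim_less[OF assms(1,2,4) _ d]
      Ls_compl_lipschitz_domain_finite[OF assms(1-3)] by simp_all
  then show "Ps s E \<Omega> < \<infinity>"
    using Ps_le_inside_plus_across[OF assms(1), of s E] by (simp add: ennreal_mult_less_top le_less_trans)
qed

end
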